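(* Let $s\ge 1$, $q=4^{2s}$, and let $\theta$ be the automorphism of $F_q$ given by $\theta(a)=a^{4^s}$. Let $n$ be an even positive integer and suppose $x^n-1=h(x)g(x)$ in $F_q[x;\theta]$, where the degree of $g(x)$ is odd. If $g(x)$ is a $\theta$-palindromic polynomial, then $h(x)$ is a palindromic polynomial.
   Context: $F_q[x;\theta]$ is the skew polynomial ring: polynomials $\sum a_ix^i$ with $a_i\in F_q$, usual addition, and multiplication determined by $xa=\theta(a)x$ for $a\in F_q$. A polynomial $f(x)=a_0+a_1x+\dots+a_tx^t$ of degree $t$ is palindromic if $a_i=a_{t-i}$ for all $i\in\{0,\ldots,t\}$, and $\theta$-palindromic if $a_i=\theta(a_{t-i})$ for all $i\in\{0,\ldots,t\}$. *)

theory Defs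
  imports "HOL-Computational_Algebra.Polynomial" "HOL-Library.Cardinality"
begin

text \<open>Multiplication in the skew polynomial ring F[x;theta], with x a = theta(a) x.
  Polynomials are represented by their coefficient lists (type 'a poly, coefficient i
  belongs to x^i, coefficients written on the left).\<close>
definition skew_mult :: "('a::comm_ring_1 \<Rightarrow> 'a) \<Rightarrow> 'a poly \<Rightarrow> 'a poly \<Rightarrow> 'a poly" where
  "skew_mult \<theta> f g =
     (\<Sum>i\<le>degree f. \<Sum>j\<le>degree g. monom (coeff f i * (\<theta> ^^ i) (coeff g j)) (i + j))"

definition palindromic :: "'a::zero poly \<Rightarrow> bool" where
  "palindromic f \<longleftrightarrow> (\<forall>i\<le>degree f. coeff f i = coeff f (degree f - i))"

definition theta_palindromic :: "('a \<Rightarrow> 'a) \<Rightarrow> 'a::zero poly \<Rightarrow> bool" where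
  "theta_palindromic \<theta> f \<longleftrightarrow> (\<forall>i\<le>degree f. coeff f i = \<theta> (coeff f (degree f - i)))"

end

theory Submission
  imports Defs
begin

text \<open>In characteristic 2 the polynomial x^n - 1 = x^n + 1 is palindromic, and the
  Frobenius power theta is an involution. Reversing the coefficients of the identity
  x^n - 1 = h g therefore gives rev(h) g = x^n - 1 as well: the parity twist that
  reversal introduces into the powers theta^i is undone by theta-palindromicity of g
  because deg h = n - deg g is odd. Hence (rev(h) - h) g = 0, and since theta preserves
  nonzero leading coefficients, rev(h) = h.\<close>

lemma finite_field_power_card: "a ^ CARD('a) = a" for a :: "'a::{field,finite}"
proof (cases "a = 0")
  case True
  then show ?thesis by (simp add: power_0_left)
next
  case False
  let ?S = "UNIV - {0::'a}"
  have inj: "inj_on ((*) a) ?S"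
    using False by (auto simp: inj_on_def)
  have "(*) a ` ?S = ?S"
  proof
    show "?S \<subseteq> (*) a ` ?S"
    proof
      fix y assume "y \<in> ?S"
      then have "y = a * (y / a)" "y / a \<in> ?S" using False by auto
      then show "y \<in> (*) a ` ?S" by blast
    qed
  qed (use False in auto)
  then have "prod ((*) a) ?S = prod id ?S"
    using prod.reindex[OF inj, of id] by simp
  moreover have "prod ((*) a) ?S = a ^ card ?S * prod id ?S"
    by (simp add: prod.distrib)
  ultimately have "a ^ card ?S = 1" by simp
  moreover have "card ?S = CARD('a) - 1"
    by (simp add: card_Diff_singleton)
  moreover have "CARD('a) \<ge> 1"
    by (simp add: Suc_leI)
  ultimately show ?thesis
    by (metis Suc_diff_le diff_Suc_1 mult.commute mult_1 power_Suc)
qed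

lemma minus_one_eq_one_if_even_card:
  assumes "even CARD('a::{field,finite})"
  shows "(-1::'a) = 1"
  using finite_field_power_card[of "-1::'a"] assms by simp

lemma frobenius_involution:
  fixes a :: "'a::{field,finite}"
  assumes "CARD('a) = r * r"
  shows "(a ^ r) ^ r = a"
  by (simp add: power_mult[symmetric] assms[symmetric] finite_field_power_card)

lemma funpow_involution:
  assumes "\<And>x. T (T x) = x"
  shows "(T ^^ i) x = (if even i then x else T x)"
  by (induction i) (auto simp: assms)

lemma funpow_involution_neq_0:
  assumes "\<And>x. T (T x) = x" and "\<And>x. T x = 0 \<longleftrightarrow> x = 0" and "x \<noteq> 0"
  shows "(T ^^ i) x \<noteq> 0"
  using assms by (simp add: funpow_involution)

lemma coeff_monom_one_minus_one_sym:
  assumes "(-1::'a::comm_ring_1) = 1" and "n > 0" and "l \<le> n"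
  shows "coeff (monom (1::'a) n - 1) (n - l) = coeff (monom 1 n - 1) l"
  using assms by (auto simp: coeff_monom)

definition skew_conv ::
    "('a::comm_ring_1 \<Rightarrow> 'a) \<Rightarrow> (nat \<Rightarrow> 'a) \<Rightarrow> (nat \<Rightarrow> 'a) \<Rightarrow> nat \<Rightarrow> nat \<Rightarrow> nat \<Rightarrow> 'a" where
  "skew_conv T a b m k l = (\<Sum>i\<le>m. \<Sum>j\<le>k. if i + j = l then a i * (T ^^ i) (b j) else 0)"

lemma coeff_skew_mult:
  "coeff (skew_mult T f g) l = skew_conv T (coeff f) (coeff g) (degree f) (degree g) l"
  by (simp add: skew_mult_def skew_conv_def coeff_sum coeff_monom)

lemma skew_mult_0_left [simp]: "skew_mult T 0 g = 0"
  by (simp add: skew_mult_def)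

lemma skew_conv_diff_left:
  "skew_conv T (\<lambda>i. a i - a' i) b m k l = skew_conv T a b m k l - skew_conv T a' b m k l"
  unfolding skew_conv_def sum_subtractf[symmetric]
  by (intro sum.cong refl) (simp add: left_diff_distrib)

lemma skew_conv_beyond: "m + k < l \<Longrightarrow> skew_conv T a b m k l = 0"
  unfolding skew_conv_def by (auto intro!: sum.neutral)

lemma skew_conv_top:
  assumes "D \<le> m" and "\<And>i. D < i \<Longrightarrow> i \<le> m \<Longrightarrow> a i = 0"
  shows "skew_conv T a b m k (D + k) = a D * (T ^^ D) (b k)"
proof -
  have "(\<Sum>j\<le>k. if i + j = D + k then a i * (T ^^ i) (b j) else 0)
      = (if i = D then a D * (T ^^ D) (b k) else 0)" if "i \<le> m" for i
  proof (cases "i \<le> D")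
    case True
    have "(\<Sum>j\<le>k. if i + j = D + k then a i * (T ^^ i) (b j) else 0)
        = (\<Sum>j\<le>k. if j = D + k - i then a i * (T ^^ i) (b j) else 0)"
      using True by (intro sum.cong) auto
    then show ?thesis using True by auto
  next
    case False
    then have "a i = 0" using assms(2) that by simp
    then show ?thesis using False by (auto intro!: sum.neutral)
  qed
  then have "skew_conv T a b m k (D + k) = (\<Sum>i\<le>m. if i = D then a D * (T ^^ D) (b k) else 0)"
    unfolding skew_conv_def by (intro sum.cong) simp_all
  then show ?thesis
    using assms(1) by simp
qed

lemma skew_conv_eq_0_imp_eq_0:
  fixes a b :: "nat \<Rightarrow> 'a::idom"
  assumes "b k \<noteq> 0" and "\<And>i x. x \<noteq> 0 \<Longrightarrow> (T ^^ i) x \<noteq> 0"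
    and "\<And>l. skew_conv T a b m k l = 0" and "i \<le> m"
  shows "a i = 0"
proof (rule ccontr)
  assume "a i \<noteq> 0"
  have fin: "finite {i. i \<le> m \<and> a i \<noteq> 0}" by simp
  define D where "D = Max {i. i \<le> m \<and> a i \<noteq> 0}"
  have "D \<in> {i. i \<le> m \<and> a i \<noteq> 0}"
    unfolding D_def by (rule Max_in[OF fin]) (use \<open>a i \<noteq> 0\<close> assms(4) in auto)
  then have "D \<le> m" "a D \<noteq> 0" by auto
  moreover have "a j = 0" if "D < j" "j \<le> m" for j
  proof (rule ccontr)
    assume "a j \<noteq> 0"
    then have "j \<le> D"
      unfolding D_def using that by (intro Max_ge[OF fin]) simp
    with that show False by simp
  qed
  ultimately have "skew_conv T a b m k (D + k) \<noteq> 0"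
    using skew_conv_top[of D m a T b k] assms(1,2) by simp
  with assms(3) show False by simp
qed

lemma coeff_skew_mult_degree:
  "coeff (skew_mult T f g) (degree f + degree g) = lead_coeff f * (T ^^ degree f) (lead_coeff g)"
  unfolding coeff_skew_mult by (rule skew_conv_top) (auto simp: coeff_eq_0)

lemma degree_skew_mult:
  fixes f g :: "'a::idom poly"
  assumes "f \<noteq> 0" "g \<noteq> 0" and "\<And>i x. x \<noteq> 0 \<Longrightarrow> (T ^^ i) x \<noteq> 0"
  shows "degree (skew_mult T f g) = degree f + degree g"
proof (rule order_antisym)
  show "degree (skew_mult T f g) \<le> degree f + degree g"
    by (rule degree_le) (simp add: coeff_skew_mult skew_conv_beyond)
  show "degree f + degree g \<le> degree (skew_mult T f g)"
    using assms(1,2) assms(3)[of "lead_coeff g" "degree f"]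
    by (intro le_degree) (auto simp: coeff_skew_mult_degree)
qed

text \<open>Reversing the coefficients of the left factor: the twist theta^(m-i) of reversal
  becomes theta^i exactly when m is odd and the right factor is theta-palindromic.\<close>
lemma skew_conv_reverse:
  assumes invol: "\<And>x. T (T x) = x" and "odd m"
    and pal: "\<And>j. j \<le> k \<Longrightarrow> b (k - j) = T (b j)" and "l \<le> m + k"
  shows "skew_conv T a b m k (m + k - l) = skew_conv T (\<lambda>i. a (m - i)) b m k l"
proof -
  have twist: "(T ^^ (m - i)) (b (k - j)) = (T ^^ i) (b j)" if "i \<le> m" "j \<le> k" for i j
    using that \<open>odd m\<close> by (auto simp: pal funpow_involution[OF invol] invol)
  have "skew_conv T a b m k (m + k - l)
      = (\<Sum>i\<le>m. \<Sum>j\<le>k. if (m - i) + (k - j) = m + k - l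
          then a (m - i) * (T ^^ (m - i)) (b (k - j)) else 0)"
    unfolding skew_conv_def
    by (rule sum.reindex_bij_witness[where i="\<lambda>i. m - i" and j="\<lambda>i. m - i"], auto,
        rule sum.reindex_bij_witness[where i="\<lambda>j. k - j" and j="\<lambda>j. k - j"], auto)
  also have "\<dots> = skew_conv T (\<lambda>i. a (m - i)) b m k l"
    unfolding skew_conv_def using \<open>l \<le> m + k\<close>
    by (intro sum.cong refl) (auto simp: twist)
  finally show ?thesis .
qed

lemma palindromic_left_factor:
  fixes f g :: "'a::idom poly"
  assumes invol: "\<And>x. T (T x) = x" and T0: "\<And>x. T x = 0 \<longleftrightarrow> x = 0"
    and "odd (degree f)" and "g \<noteq> 0" and "theta_palindromic T g"
    and sym: "\<And>l. l \<le> degree f + degree g \<Longrightarrow>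
      coeff (skew_mult T f g) (degree f + degree g - l) = coeff (skew_mult T f g) l"
  shows "palindromic f"
proof -
  define m k where "m = degree f" and "k = degree g"
  define d where "d = (\<lambda>i. coeff f (m - i) - coeff f i)"
  have pal: "coeff g (k - j) = T (coeff g j)" if "j \<le> k" for j
    using \<open>theta_palindromic T g\<close> that unfolding theta_palindromic_def k_def
    by (metis diff_diff_cancel diff_le_self)
  have "skew_conv T d (coeff g) m k l = 0" for l
  proof (cases "l \<le> m + k")
    case True
    have "skew_conv T (coeff f) (coeff g) m k (m + k - l)
        = skew_conv T (\<lambda>i. coeff f (m - i)) (coeff g) m k l"
      using \<open>odd (degree f)\<close> pal True by (intro skew_conv_reverse) (simp_all add: invol m_def)
    then show ?thesis
      using sym[of l] True
      by (simp add: d_def skew_conv_diff_left coeff_skew_mult m_def k_def)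
  qed (simp add: skew_conv_beyond)
  moreover note funpow_involution_neq_0[OF invol T0]
  moreover have "coeff g k \<noteq> 0"
    using \<open>g \<noteq> 0\<close> by (simp add: k_def)
  ultimately have "d i = 0" if "i \<le> m" for i
    using skew_conv_eq_0_imp_eq_0 that by blast
  then show ?thesis
    unfolding palindromic_def d_def m_def by simp
qed

theorem theorem4:
  fixes s n :: nat and h g :: "'a::{field,finite} poly"
  assumes "s \<ge> 1"
    and "CARD('a) = 4 ^ (2 * s)"
    and "even n" and "n > 0"
    and "monom 1 n - 1 = skew_mult (\<lambda>a. a ^ (4 ^ s)) h g"
    and "odd (degree g)"
    and "theta_palindromic (\<lambda>a. a ^ (4 ^ s)) g"
  shows "palindromic h"
proof -
  define T where "T = (\<lambda>a::'a. a ^ (4 ^ s))"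
  have invol: "T (T x) = x" for x
    unfolding T_def using assms(2) by (intro frobenius_involution) (simp add: power_add[symmetric] mult_2)
  have T0: "T x = 0 \<longleftrightarrow> x = 0" for x
    by (simp add: T_def)
  have char2: "(-1::'a) = 1"
    using assms(1,2) by (intro minus_one_eq_one_if_even_card) simp
  have deg_lhs: "degree (monom (1::'a) n - 1) = n"
    using \<open>n > 0\<close> degree_add_eq_left[of "-1" "monom (1::'a) n"] by (simp add: degree_monom_eq)
  have "g \<noteq> 0" using \<open>odd (degree g)\<close> by auto
  moreover have "h \<noteq> 0"
    using assms(4,5) deg_lhs by auto
  ultimately have deg: "n = degree h + degree g"
    using deg_lhs assms(5) degree_skew_mult[OF _ _ funpow_involution_neq_0[OF invol T0]]
    by (simp add: T_def)
  then have "odd (degree h)"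
    using assms(3,6) by simp
  then show ?thesis
    using palindromic_left_factor[OF invol T0 _ \<open>g \<noteq> 0\<close>] assms(5,7) deg
      coeff_monom_one_minus_one_sym[OF char2 \<open>n > 0\<close>]
    by (simp add: T_def)
qed

end
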